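(* Let $f\in\mathcal{C}$ be differentiable on $(0,\infty)$. Let $(P,Q)$ and $(P',Q')$ be two pairs of mutually absolutely continuous probability measures ($P\ll Q\ll P$, $P'\ll Q'\ll P'$). If $E_\gamma(P\|Q)=E_\gamma(P'\|Q')$ and $E_\gamma(Q\|P)=E_\gamma(Q'\|P')$ for all $\gamma\ge1$, then $D_f(P\|Q)=D_f(P'\|Q')$. Likewise, if $\mathcal{I}_\omega(P\|Q)=\mathcal{I}_\omega(P'\|Q')$ for all $\omega\in(0,1)$, then $D_f(P\|Q)=D_f(P'\|Q')$.
   Context: $\mathcal{C}$ is the set of convex $f\colon(0,\infty)\to\mathbb{R}$ with $f(1)=0$. For densities $p,q$ w.r.t. a dominating measure $\mu$, $D_f(P\|Q):=\int qf(p/q)\,\mathrm{d}\mu$ (standard conventions at $0$). $E_\gamma(P\|Q):=\sup_U(P(U)-\gamma Q(U))$ for $\gamma\ge1$; $\mathcal{I}_\omega(P\|Q):=D_{\phi_\omega}(P\|Q)$ with $\phi_\omega(t)=\min\{\omega,1-\omega\}-\min\{\omega t,1-\omega\}$. *)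

theory Defs
  imports "HOL-Probability.Probability"
begin

definition fdiv_class :: "(real \<Rightarrow> real) \<Rightarrow> bool" where
  "fdiv_class f \<longleftrightarrow> convex_on {0<..} f \<and> f 1 = 0"

text \<open>f-divergence D_f(P||Q) = integral of q f(p/q) dmu, taken with the dominating
  measure mu = Q (so q = 1 and p = dP/dQ, the Radon-Nikodym derivative).\<close>
definition f_divergence :: "(real \<Rightarrow> real) \<Rightarrow> 'a measure \<Rightarrow> 'a measure \<Rightarrow> ereal" where
  "f_divergence f P Q =
     (enn2ereal (\<integral>\<^sup>+ x. ennreal (f (enn2real (RN_deriv Q P x))) \<partial>Q)
      - enn2ereal (\<integral>\<^sup>+ x. ennreal (- f (enn2real (RN_deriv Q P x))) \<partial>Q))"

definition E_gamma :: "real \<Rightarrow> 'a measure \<Rightarrow> 'a measure \<Rightarrow> real" where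
  "E_gamma \<gamma> P Q = (SUP U \<in> sets P. measure P U - \<gamma> * measure Q U)"

definition phi_omega :: "real \<Rightarrow> real \<Rightarrow> real" where
  "phi_omega \<omega> t = min \<omega> (1 - \<omega>) - min (\<omega> * t) (1 - \<omega>)"

definition I_omega :: "real \<Rightarrow> 'a measure \<Rightarrow> 'a measure \<Rightarrow> ereal" where
  "I_omega \<omega> P Q = f_divergence (phi_omega \<omega>) P Q"

end

theory Submission
  imports Defs
begin

text \<open>Everything is a functional of the distribution of the likelihood ratio \<open>L = dP/dQ\<close> under
  \<open>Q\<close>. Both \<open>E\<^sub>\<gamma>(P\<parallel>Q)\<close> and, after rescaling, \<open>E\<^sub>\<gamma>(Q\<parallel>P)\<close> and \<open>\<I>\<^sub>\<omega>(P\<parallel>Q)\<close> are affine in the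
  stop-loss transform \<open>c \<mapsto> E\<^sub>Q[(L - c)\<^sup>+]\<close> for \<open>c > 0\<close>, whose right derivative is \<open>-Q(L > c)\<close>.
  Either hypothesis therefore forces the two likelihood-ratio distributions to coincide, and
  \<open>D\<^sub>f(P\<parallel>Q) = E\<^sub>Q[f(L)]\<close> depends on that distribution only, since \<open>L > 0\<close> holds \<open>Q\<close>-a.e.\<close>

definition stop_loss :: "real measure \<Rightarrow> real \<Rightarrow> real" where
  "stop_loss M c = (\<integral>x. max 0 (x - c) \<partial>M)"

lemma pos_part_increment_bounds:
  fixes t h :: real
  assumes "0 \<le> h"
  shows "0 \<le> max 0 t - max 0 (t - h)" "max 0 t - max 0 (t - h) \<le> h"
    and "h \<le> t \<Longrightarrow> max 0 t - max 0 (t - h) = h"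
  using assms by (auto simp: max_def)

lemma pos_part_difference_quotient_tendsto_indicator:
  fixes c x :: real
  shows "(\<lambda>n. real (Suc n) * (max 0 (x - c) - max 0 (x - (c + 1 / real (Suc n)))))
           \<longlonglongrightarrow> indicator {c<..} x"
proof (cases "c < x")
  case True
  then obtain N where N: "1 / real (Suc N) < x - c"
    using reals_Archimedean[of "x - c"] by (auto simp: divide_inverse)
  have "real (Suc n) * (max 0 (x - c) - max 0 (x - (c + 1 / real (Suc n)))) = 1" if "N \<le> n" for n
  proof -
    have "1 / real (Suc n) \<le> 1 / real (Suc N)"
      using that by (intro divide_left_mono) auto
    then have "max 0 (x - c) - max 0 (x - c - 1 / real (Suc n)) = 1 / real (Suc n)"
      using N by (intro pos_part_increment_bounds(3)) auto
    then show ?thesis by (simp add: diff_diff_eq)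
  qed
  then have "eventually (\<lambda>n. real (Suc n) * (max 0 (x - c) - max 0 (x - (c + 1 / real (Suc n)))) = 1)
      sequentially"
    unfolding eventually_sequentially by blast
  then show ?thesis
    using True by (simp add: tendsto_eventually)
next
  case False
  have "x - (c + 1 / real (Suc n)) \<le> 0" for n
    using False by (smt (verit) divide_pos_pos of_nat_0_less_iff zero_less_Suc)
  then show ?thesis using False by (simp add: max_absorb1)
qed

lemma (in real_distribution) stop_loss_difference_quotient_tendsto:
  assumes int: "integrable M (\<lambda>x. x)"
  shows "(\<lambda>n. real (Suc n) * (stop_loss M c - stop_loss M (c + 1 / real (Suc n))))
           \<longlonglongrightarrow> measure M {c<..}"
proof -
  define s where "s n x = real (Suc n) * (max 0 (x - c) - max 0 (x - (c + 1 / real (Suc n))))" for n x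
  have "(\<lambda>n. integral\<^sup>L M (s n)) \<longlonglongrightarrow> integral\<^sup>L M (indicator {c<..} :: real \<Rightarrow> real)"
  proof (rule integral_dominated_convergence[where w="\<lambda>_. 1"])
    show "AE x in M. (\<lambda>n. s n x) \<longlonglongrightarrow> indicator {c<..} x"
      unfolding s_def using pos_part_difference_quotient_tendsto_indicator by simp
    show "AE x in M. norm (s n x) \<le> 1" for n
    proof (rule AE_I2)
      fix x
      have h: "0 \<le> 1 / real (Suc n)" by simp
      note b = pos_part_increment_bounds[OF h, of "x - c", unfolded diff_diff_eq]
      have "s n x \<le> real (Suc n) * (1 / real (Suc n))"
        unfolding s_def using b(2) by (intro mult_left_mono) auto
      then show "norm (s n x) \<le> 1" using b(1) by (simp add: s_def)
    qed
    show "s n \<in> borel_measurable M" for n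
      unfolding s_def by simp
  qed simp_all
  moreover have "integral\<^sup>L M (s n) = real (Suc n) * (stop_loss M c - stop_loss M (c + 1 / real (Suc n)))" for n
    unfolding s_def stop_loss_def using int by (simp add: integral_diff)
  ultimately show ?thesis by simp
qed

lemma (in real_distribution) cdf_eq_one_minus_measure_greaterThan:
  "cdf M x = 1 - measure M {x<..}"
proof -
  have "{..x} = space M - {x<..}" by auto
  then show ?thesis using prob_compl[of "{x<..}"] by (simp add: cdf_def)
qed

lemma (in real_distribution) measure_greaterThan_eq_one:
  assumes "measure M {..0} = 0" "x \<le> 0"
  shows "measure M {x<..} = 1"
proof -
  have "cdf M x \<le> cdf M 0" using assms(2) by (rule cdf_nondecreasing)
  then have "cdf M x = 0" using assms(1) cdf_nonneg[of x] unfolding cdf_def by linarith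
  then show ?thesis using cdf_eq_one_minus_measure_greaterThan[of x] by simp
qed

lemma real_distribution_eq_if_stop_loss_eq:
  assumes M: "real_distribution M" and N: "real_distribution N"
    and M_pos: "measure M {..0} = 0" and N_pos: "measure N {..0} = 0"
    and M_int: "integrable M (\<lambda>x. x)" and N_int: "integrable N (\<lambda>x. x)"
    and eq: "\<And>c. c > 0 \<Longrightarrow> stop_loss M c = stop_loss N c"
  shows "M = N"
proof -
  have tail_eq: "measure M {x<..} = measure N {x<..}" for x
  proof (cases "x \<le> 0")
    case True
    then show ?thesis
      using real_distribution.measure_greaterThan_eq_one[OF M M_pos]
        real_distribution.measure_greaterThan_eq_one[OF N N_pos] by simp
  next
    case False
    have "stop_loss M (x + 1 / real (Suc n)) = stop_loss N (x + 1 / real (Suc n))" for n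
      using False by (intro eq) (simp add: add_pos_pos)
    then show ?thesis
      using real_distribution.stop_loss_difference_quotient_tendsto[OF M M_int, of x]
        real_distribution.stop_loss_difference_quotient_tendsto[OF N N_int, of x] False eq[of x]
      by (auto intro: LIMSEQ_unique)
  qed
  have "cdf M x = cdf N x" for x
    using tail_eq[of x] real_distribution.cdf_eq_one_minus_measure_greaterThan M N by metis
  then show ?thesis using cdf_unique[OF M N] by blast
qed

lemma (in finite_measure) SUP_integral_indicator_eq_integral_pos_part:
  fixes h :: "'a \<Rightarrow> real"
  assumes h: "integrable M h"
  shows "(SUP U\<in>sets M. \<integral>x. indicator U x * h x \<partial>M) = (\<integral>x. max 0 (h x) \<partial>M)"
proof (rule cSup_eq_maximum)
  define U\<^sub>0 where "U\<^sub>0 = {x \<in> space M. 0 < h x}"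
  have "U\<^sub>0 \<in> sets M" unfolding U\<^sub>0_def using h by measurable
  moreover have "(\<integral>x. max 0 (h x) \<partial>M) = (\<integral>x. indicator U\<^sub>0 x * h x \<partial>M)"
    by (rule Bochner_Integration.integral_cong) (auto simp: U\<^sub>0_def indicator_def max_def)
  ultimately show "(\<integral>x. max 0 (h x) \<partial>M) \<in> (\<lambda>U. \<integral>x. indicator U x * h x \<partial>M) ` sets M"
    by blast
next
  fix y assume "y \<in> (\<lambda>U. \<integral>x. indicator U x * h x \<partial>M) ` sets M"
  then obtain U where U: "U \<in> sets M" and y: "y = (\<integral>x. indicator U x * h x \<partial>M)" by blast
  show "y \<le> (\<integral>x. max 0 (h x) \<partial>M)"
    unfolding y using integrable_mult_indicator[OF U h] h
    by (intro integral_mono) (auto simp: indicator_def)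
qed

lemma enn2ereal_eq_ereal_enn2real: "x < \<top> \<Longrightarrow> enn2ereal x = ereal (enn2real x)"
  by (cases x rule: ennreal_cases) auto

lemma ereal_integral_eq_nn_integral_diff:
  fixes g :: "'a \<Rightarrow> real"
  assumes "integrable M g"
  shows "ereal (\<integral>x. g x \<partial>M) =
           enn2ereal (\<integral>\<^sup>+ x. ennreal (g x) \<partial>M) - enn2ereal (\<integral>\<^sup>+ x. ennreal (- g x) \<partial>M)"
proof -
  have abs_finite: "(\<integral>\<^sup>+ x. ennreal \<bar>g x\<bar> \<partial>M) < \<infinity>"
    using assms by (simp add: integrable_iff_bounded)
  have "(\<integral>\<^sup>+ x. ennreal (g x) \<partial>M) < \<infinity>" "(\<integral>\<^sup>+ x. ennreal (- g x) \<partial>M) < \<infinity>"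
    by (rule le_less_trans[OF nn_integral_mono abs_finite], simp add: ennreal_leI)+
  then show ?thesis
    unfolding real_lebesgue_integral_def[OF assms]
    by (simp add: enn2ereal_eq_ereal_enn2real)
qed

locale equivalent_prob_measures = P: prob_space P + Q: prob_space Q for P Q :: "'a measure" +
  assumes sets_eq: "sets P = sets Q"
    and P_ac_Q: "absolutely_continuous Q P" and Q_ac_P: "absolutely_continuous P Q"
begin

definition lr :: "'a \<Rightarrow> real" where "lr x = enn2real (RN_deriv Q P x)"

lemma borel_measurable_lr[measurable]: "lr \<in> borel_measurable Q"
  unfolding lr_def by simp

lemma lr_nonneg: "0 \<le> lr x"
  unfolding lr_def by simp

lemma
  assumes "g \<in> borel_measurable Q"
  shows integrable_P_iff: "integrable P g \<longleftrightarrow> integrable Q (\<lambda>x. lr x * g x)"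
    and integral_P_eq: "integral\<^sup>L P g = (\<integral>x. lr x * g x \<partial>Q)"
  unfolding lr_def
  using Q.RN_deriv_integrable[OF _ P_ac_Q sets_eq assms] Q.RN_deriv_integral[OF _ P_ac_Q sets_eq assms]
    P.sigma_finite_measure_axioms
  by auto

lemma integrable_lr: "integrable Q lr"
  and integral_lr: "(\<integral>x. lr x \<partial>Q) = 1"
  using integrable_P_iff[of "\<lambda>_. 1"] integral_P_eq[of "\<lambda>_. 1"] P.prob_space by auto

lemma AE_lr_pos: "AE x in Q. 0 < lr x"
proof -
  obtain D where D: "AE x in Q. RN_deriv Q P x = ennreal (D x)" "AE x in P. 0 < D x" "\<And>x. 0 \<le> D x"
    using Q.real_RN_deriv[OF _ P_ac_Q sets_eq] P.finite_measure_axioms by blast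
  have "AE x in P. RN_deriv Q P x = ennreal (D x)"
    using absolutely_continuous_AE[OF sets_eq P_ac_Q D(1)] .
  with D(2) have "AE x in P. 0 < lr x"
    by eventually_elim (simp add: lr_def D(3))
  then show ?thesis
    using absolutely_continuous_AE[OF sets_eq[symmetric] Q_ac_P] by blast
qed

lemma measure_combination_eq_integral:
  assumes "U \<in> sets Q"
  shows "a * measure P U - b * measure Q U = (\<integral>x. indicator U x * (a * lr x - b) \<partial>Q)"
proof -
  have "(\<integral>x. indicator U x * (a * lr x - b) \<partial>Q) = (\<integral>x. a * (lr x * indicator U x) - b * indicator U x \<partial>Q)"
    by (rule Bochner_Integration.integral_cong) (auto simp: algebra_simps)
  also have "\<dots> = a * (\<integral>x. lr x * indicator U x \<partial>Q) - b * measure Q U"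
    using assms integrable_real_mult_indicator[OF assms integrable_lr]
    by (subst Bochner_Integration.integral_diff) (auto simp: less_top[symmetric])
  also have "(\<integral>x. lr x * indicator U x \<partial>Q) = measure P U"
    using integral_P_eq[of "indicator U"] assms sets_eq by simp
  finally show ?thesis ..
qed

lemma E_gamma_eq_integral: "E_gamma \<gamma> P Q = (\<integral>x. max 0 (lr x - \<gamma>) \<partial>Q)"
proof -
  have "E_gamma \<gamma> P Q = (SUP U\<in>sets Q. \<integral>x. indicator U x * (lr x - \<gamma>) \<partial>Q)"
    unfolding E_gamma_def sets_eq
    using measure_combination_eq_integral[where a=1 and b=\<gamma>] by simp
  also have "\<dots> = (\<integral>x. max 0 (lr x - \<gamma>) \<partial>Q)"
    using integrable_lr by (intro Q.SUP_integral_indicator_eq_integral_pos_part) auto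
  finally show ?thesis .
qed

lemma E_gamma_swap_eq_integral: "E_gamma \<gamma> Q P = (\<integral>x. max 0 (1 - \<gamma> * lr x) \<partial>Q)"
proof -
  have "E_gamma \<gamma> Q P = (SUP U\<in>sets Q. \<integral>x. indicator U x * (1 - \<gamma> * lr x) \<partial>Q)"
    unfolding E_gamma_def
    using measure_combination_eq_integral[where a="-\<gamma>" and b="-1"] by simp
  also have "\<dots> = (\<integral>x. max 0 (1 - \<gamma> * lr x) \<partial>Q)"
    using integrable_lr by (intro Q.SUP_integral_indicator_eq_integral_pos_part) auto
  finally show ?thesis .
qed

definition lr_distr :: "real measure" where "lr_distr = distr Q borel lr"

lemma real_distribution_lr_distr: "real_distribution lr_distr"
  unfolding lr_distr_def by simp

lemma measure_lr_distr_atMost_0: "measure lr_distr {..0} = 0"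
proof -
  have "measure lr_distr {..0} = measure Q {x \<in> space Q. \<not> 0 < lr x}"
    unfolding lr_distr_def by (simp add: measure_distr vimage_def Int_def conj_commute not_less)
  also have "\<dots> = 0"
    using AE_lr_pos by (subst (asm) AE_iff_measurable[OF _ refl]) (auto simp: measure_def)
  finally show ?thesis .
qed

lemma integrable_lr_distr: "integrable lr_distr (\<lambda>x. x)"
  unfolding lr_distr_def using integrable_lr by (subst integrable_distr_eq) auto

lemma stop_loss_lr_distr: "stop_loss lr_distr c = (\<integral>x. max 0 (lr x - c) \<partial>Q)"
  unfolding lr_distr_def stop_loss_def by (subst integral_distr) auto

lemma E_gamma_eq_stop_loss: "E_gamma \<gamma> P Q = stop_loss lr_distr \<gamma>"
  unfolding stop_loss_lr_distr E_gamma_eq_integral ..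

lemma stop_loss_eq_E_gamma_swap:
  assumes "c > 0"
  shows "stop_loss lr_distr c = 1 - c + c * E_gamma (1 / c) Q P"
proof -
  have "c * E_gamma (1 / c) Q P = (\<integral>x. c * max 0 (1 - 1 / c * lr x) \<partial>Q)"
    unfolding E_gamma_swap_eq_integral by simp
  also have "\<dots> = (\<integral>x. max 0 (c - lr x) \<partial>Q)"
    using assms by (simp add: max_mult_distrib_left right_diff_distrib)
  finally have "c * E_gamma (1 / c) Q P = (\<integral>x. max 0 (c - lr x) \<partial>Q)" .
  moreover have "stop_loss lr_distr c = (\<integral>x. lr x - c + max 0 (c - lr x) \<partial>Q)"
    unfolding stop_loss_lr_distr by (rule Bochner_Integration.integral_cong) (auto simp: max_def)
  ultimately show ?thesis
    using integrable_lr integral_lr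
    by (simp add: Bochner_Integration.integral_diff Bochner_Integration.integral_add Q.prob_space)
qed

lemma I_omega_eq_stop_loss:
  assumes \<omega>: "0 < \<omega>" "\<omega> < 1"
  shows "I_omega \<omega> P Q = ereal (min \<omega> (1 - \<omega>) - \<omega> + \<omega> * stop_loss lr_distr ((1 - \<omega>) / \<omega>))"
proof -
  define c where "c = (1 - \<omega>) / \<omega>"
  have phi_eq: "phi_omega \<omega> (lr x) = min \<omega> (1 - \<omega>) - \<omega> * lr x + \<omega> * max 0 (lr x - c)" for x
  proof -
    have "\<omega> * c = 1 - \<omega>"
      using \<omega> by (simp add: c_def)
    then have "\<omega> * max 0 (lr x - c) = max 0 (\<omega> * lr x - (1 - \<omega>))"
      using \<omega> by (simp add: max_mult_distrib_left right_diff_distrib)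
    then show ?thesis unfolding phi_omega_def by (simp add: max_def min_def)
  qed
  have "integrable Q (\<lambda>x. phi_omega \<omega> (lr x))"
  proof (rule Q.integrable_const_bound[where B=1])
    show "AE x in Q. norm (phi_omega \<omega> (lr x)) \<le> 1"
    proof (rule AE_I2)
      fix x
      have "0 \<le> \<omega> * lr x" using \<omega> lr_nonneg[of x] by simp
      then show "norm (phi_omega \<omega> (lr x)) \<le> 1" using \<omega> by (auto simp: phi_omega_def min_def)
    qed
    show "(\<lambda>x. phi_omega \<omega> (lr x)) \<in> borel_measurable Q"
      unfolding phi_omega_def by measurable
  qed
  then have "I_omega \<omega> P Q = ereal (\<integral>x. phi_omega \<omega> (lr x) \<partial>Q)"
    unfolding I_omega_def f_divergence_def lr_def[symmetric]
    by (simp add: ereal_integral_eq_nn_integral_diff)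
  also have "(\<integral>x. phi_omega \<omega> (lr x) \<partial>Q) = min \<omega> (1 - \<omega>) - \<omega> + \<omega> * stop_loss lr_distr c"
    unfolding phi_eq stop_loss_lr_distr using integrable_lr integral_lr
    by (simp add: Bochner_Integration.integral_diff Bochner_Integration.integral_add Q.prob_space)
  finally show ?thesis by (simp add: c_def)
qed

lemma f_divergence_eq_lr_distr:
  assumes "continuous_on {0<..} f"
  defines "g \<equiv> \<lambda>y. if y \<in> {0<..} then f y else 0"
  shows "f_divergence f P Q =
           enn2ereal (\<integral>\<^sup>+ y. ennreal (g y) \<partial>lr_distr) - enn2ereal (\<integral>\<^sup>+ y. ennreal (- g y) \<partial>lr_distr)"
proof -
  have g: "g \<in> borel_measurable borel"
    unfolding g_def using assms(1) by (intro borel_measurable_continuous_on_if) auto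
  have "(\<integral>\<^sup>+ y. ennreal (h (g y)) \<partial>lr_distr) = (\<integral>\<^sup>+ x. ennreal (h (f (lr x))) \<partial>Q)"
    if "h = (\<lambda>t. t) \<or> h = uminus" for h :: "real \<Rightarrow> real"
  proof -
    have "(\<integral>\<^sup>+ y. ennreal (h (g y)) \<partial>lr_distr) = (\<integral>\<^sup>+ x. ennreal (h (g (lr x))) \<partial>Q)"
      unfolding lr_distr_def using g that by (subst nn_integral_distr) auto
    also have "\<dots> = (\<integral>\<^sup>+ x. ennreal (h (f (lr x))) \<partial>Q)"
      using AE_lr_pos by (intro nn_integral_cong_AE) (auto simp: g_def)
    finally show ?thesis .
  qed
  from this[of "\<lambda>t. t"] this[of uminus] show ?thesis
    unfolding f_divergence_def lr_def[symmetric] by simp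
qed

end

lemma f_divergence_eq_if_stop_loss_eq:
  assumes PQ: "equivalent_prob_measures P Q" and P'Q': "equivalent_prob_measures P' Q'"
    and f: "continuous_on {0<..} f"
    and eq: "\<And>c. c > 0 \<Longrightarrow> stop_loss (equivalent_prob_measures.lr_distr P Q) c
                              = stop_loss (equivalent_prob_measures.lr_distr P' Q') c"
  shows "f_divergence f P Q = f_divergence f P' Q'"
proof -
  interpret A: equivalent_prob_measures P Q by fact
  interpret B: equivalent_prob_measures P' Q' by fact
  have "A.lr_distr = B.lr_distr"
    using A.real_distribution_lr_distr B.real_distribution_lr_distr
      A.measure_lr_distr_atMost_0 B.measure_lr_distr_atMost_0
      A.integrable_lr_distr B.integrable_lr_distr eq
    by (rule real_distribution_eq_if_stop_loss_eq)
  then show ?thesis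
    using A.f_divergence_eq_lr_distr[OF f] B.f_divergence_eq_lr_distr[OF f] by simp
qed

theorem corollary1:
  fixes f :: "real \<Rightarrow> real"
    and P Q :: "'a measure" and P' Q' :: "'b measure"
  assumes fC: "fdiv_class f"
    and fdiff: "\<forall>x>0. f differentiable (at x)"
    and P: "prob_space P" and Q: "prob_space Q" and sPQ: "sets P = sets Q"
    and acPQ: "absolutely_continuous Q P" and acQP: "absolutely_continuous P Q"
    and P': "prob_space P'" and Q': "prob_space Q'" and sPQ': "sets P' = sets Q'"
    and acPQ': "absolutely_continuous Q' P'" and acQP': "absolutely_continuous P' Q'"
  shows "((\<forall>\<gamma>\<ge>1. E_gamma \<gamma> P Q = E_gamma \<gamma> P' Q' \<and> E_gamma \<gamma> Q P = E_gamma \<gamma> Q' P')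
            \<longrightarrow> f_divergence f P Q = f_divergence f P' Q')
       \<and> ((\<forall>\<omega>\<in>{0<..<1}. I_omega \<omega> P Q = I_omega \<omega> P' Q')
            \<longrightarrow> f_divergence f P Q = f_divergence f P' Q')"
proof -
  interpret A: equivalent_prob_measures P Q
    using P Q sPQ acPQ acQP by (simp add: equivalent_prob_measures_def equivalent_prob_measures_axioms_def)
  interpret B: equivalent_prob_measures P' Q'
    using P' Q' sPQ' acPQ' acQP' by (simp add: equivalent_prob_measures_def equivalent_prob_measures_axioms_def)
  have "continuous_on {0<..} f"
    using fC by (simp add: fdiv_class_def convex_on_continuous)
  then have key: "f_divergence f P Q = f_divergence f P' Q'"
    if "\<And>c. c > 0 \<Longrightarrow> stop_loss A.lr_distr c = stop_loss B.lr_distr c"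
    using that by (intro f_divergence_eq_if_stop_loss_eq) unfold_locales
  show ?thesis
  proof (intro conjI impI)
    assume E: "\<forall>\<gamma>\<ge>1. E_gamma \<gamma> P Q = E_gamma \<gamma> P' Q' \<and> E_gamma \<gamma> Q P = E_gamma \<gamma> Q' P'"
    have "stop_loss A.lr_distr c = stop_loss B.lr_distr c" if "c > 0" for c
    proof (cases "c \<ge> 1")
      case True
      then show ?thesis using E by (simp add: A.E_gamma_eq_stop_loss[symmetric] B.E_gamma_eq_stop_loss[symmetric])
    next
      case False
      then have "1 / c \<ge> 1" using that by simp
      then show ?thesis using E by (simp add: A.stop_loss_eq_E_gamma_swap[OF that] B.stop_loss_eq_E_gamma_swap[OF that])
    qed
    then show "f_divergence f P Q = f_divergence f P' Q'" by (rule key)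
  next
    assume I: "\<forall>\<omega>\<in>{0<..<1}. I_omega \<omega> P Q = I_omega \<omega> P' Q'"
    have "stop_loss A.lr_distr c = stop_loss B.lr_distr c" if "c > 0" for c
    proof -
      define \<omega> where "\<omega> = 1 / (1 + c)"
      have \<omega>: "0 < \<omega>" "\<omega> < 1" "(1 - \<omega>) / \<omega> = c"
        using that by (auto simp: \<omega>_def field_simps)
      then show ?thesis
        using I A.I_omega_eq_stop_loss[OF \<omega>(1,2)] B.I_omega_eq_stop_loss[OF \<omega>(1,2)] by auto
    qed
    then show "f_divergence f P Q = f_divergence f P' Q'" by (rule key)
  qed
qed

end
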